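(* Let $(\mathbf f,\mathbf g),(\mathbf f',\mathbf g')$ be models with $p=p_{\mathbf f,\mathbf g}$, $p'=p_{\mathbf f',\mathbf g'}$, and assume: (1) distinct labels $y_1,\dots,y_M\in\mathcal Y_{\mathrm{LLV}}\setminus\{y_0\}$ and distinct inputs $x_1,\dots,x_M\in\mathcal X_{\mathrm{LLV}}\setminus\{x_0\}$ are chosen such that $\mathbf L=[\mathbf g_0(y_1),\dots,\mathbf g_0(y_M)]$, $\mathbf L'=[\mathbf g'_0(y_1),\dots,\mathbf g'_0(y_M)]$, $\mathbf N=[\mathbf f_0(x_1),\dots,\mathbf f_0(x_M)]$, $\mathbf N'=[\mathbf f'_0(x_1),\dots,\mathbf f'_0(x_M)]$ are all invertible; (2) $p$ and $p'$ are both admissible; (3) with $x\sim p_{\mathcal D}$ and $y$ uniform on $\mathcal Y$, and $\mathbf z_1=\mathbf L^\top\mathbf f(x)$, $\mathbf z_2=\mathbf L'^\top\mathbf f'(x)$, $\mathbf w_1=\mathbf N^\top\mathbf g(y)$, $\mathbf w_2=\mathbf N'^\top\mathbf g'(y)$, the covariance matrices of the standardized vectors $\boldsymbol\Sigma_{\mathbf z_1'\mathbf z_1'},\boldsymbol\Sigma_{\mathbf w_1'\mathbf w_1'}$ and cross-covariance matrices $\boldsymbol\Sigma_{\mathbf z_1'\mathbf z_2'},\boldsymbol\Sigma_{\mathbf w_1'\mathbf w_2'}$ are non-singular. Then for every $\lambda>0$ and $\epsilon\ge0$, $$d^\lambda_{\mathrm{LLV}}(p,p')\le\epsilon\ \Longrightarrow\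 \max\big\{d_{\mathrm{SVD}}(\mathbf z_1,\mathbf z_2),\,d_{\mathrm{SVD}}(\mathbf w_1,\mathbf w_2)\big\}\le 2M\epsilon .$$
   Context: Let $\mathcal X$ be a set of inputs and $\mathcal Y$ a finite set of labels; fix $M\ge 1$. A model is a pair $(\mathbf f,\mathbf g)$ of functions $\mathbf f:\mathcal X\to\mathbb R^M$ (embedding) and $\mathbf g:\mathcal Y\to\mathbb R^M$ (unembedding); it defines $p_{\mathbf f,\mathbf g}(y\mid x)=\exp(\mathbf f(x)^\top\mathbf g(y))/\sum_{y'\in\mathcal Y}\exp(\mathbf f(x)^\top\mathbf g(y'))$. With pivot input $x_0$ and pivot label $y_0$, write $\mathbf f_0(x)=\mathbf f(x)-\mathbf f(x_0)$, $\mathbf g_0(y)=\mathbf g(y)-\mathbf g(y_0)$ (similarly primed). Fix a probability distribution $p_{\mathcal D}$ on $\mathcal X$; $\mathrm{Var}_x$ denotes variance with $x\sim p_{\mathcal D}$ and $\mathrm{Var}_y$ variance with $y$ uniform on $\mathcal Y$. Fix a finite set $\mathcal X_{\mathrm{LLV}}\subset\mathcal X$ containing $x_0$, and a set $\mathcal Y_{\mathrm{LLV}}\subset\mathcal Y$ containing $y_0$ and all labels of $\mathcal Y$ except exactly one. Consider conditional distributions $p(\cdot\mid x)$ on $\mathcal Y$ with all probabilities positive and $\log p(y\mid\cdot)$ square-integrable under $p_{\mathcal D}$. Define $\psi_x(y;p)=\sqrt{\mathrm{Var}_x[\log p(y\mid x)-\log p(y_0\mid x)]}$ and $\psi_y(x;p)=\sqrt{\mathrm{Var}_y[\log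 p(y\mid x)-\log p(y\mid x_0)]}$. Such a $p$ is admissible if (1) $p_{\mathcal D}(\{x\})>0$ for every $x\in\mathcal X_{\mathrm{LLV}}$, and for every $x\in\mathcal X_{\mathrm{LLV}}\setminus\{x_0\}$ the map $y\mapsto\log p(y\mid x)-\log p(y\mid x_0)$ is not constant on $\mathcal Y$; and (2) for every $y\in\mathcal Y_{\mathrm{LLV}}\setminus\{y_0\}$, $\mathrm{Var}_x[\log p(y\mid x)-\log p(y_0\mid x)]>0$. For admissible $p,p'$ and $\lambda>0$ define $t_1=\max_{y\in\mathcal Y_{\mathrm{LLV}}\setminus\{y_0\}}\max\Big\{\sqrt{\mathrm{Var}_x\big[\tfrac{\log p(y\mid x)}{\psi_x(y;p)}-\tfrac{\log p'(y\mid x)}{\psi_x(y;p')}\big]},\ \sqrt{\mathrm{Var}_x\big[\tfrac{\log p(y_0\mid x)}{\psi_x(y;p)}-\tfrac{\log p'(y_0\mid x)}{\psi_x(y;p')}\big]}\Big\}$, $t_2=\max_{x\in\mathcal X_{\mathrm{LLV}}\setminus\{x_0\}}\max\Big\{\sqrt{\mathrm{Var}_y\big[\tfrac{\log p(y\mid x)}{\psi_y(x;p)}-\tfrac{\log p'(y\mid x)}{\psi_y(x;p')}\big]},\ \sqrt{\mathrm{Var}_y\big[\tfrac{\log p(y\mid x_0)}{\psi_y(x;p)}-\tfrac{\log p'(y\mid x_0)}{\psi_y(x;p')}\big]}\Big\}$, $t_3=\max_{y\in\mathcal Y_{\mathrm{LLV}}\setminus\{y_0\}}|\psi_x(y;p)-\psi_x(y;p')|$,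 $t_4=\max_{x\in\mathcal X_{\mathrm{LLV}}\setminus\{x_0\}}|\psi_y(x;p)-\psi_y(x;p')|$, and $d^\lambda_{\mathrm{LLV}}(p,p')=\max\{t_1,t_2,\lambda t_3,\lambda t_4\}$. For $M$-dimensional random vectors $\mathbf z,\mathbf w$ (jointly distributed, components with finite positive variance), let $\mathbf z',\mathbf w'$ be the standardized vectors $z'_i=(z_i-\mathbb E[z_i])/\operatorname{std}(z_i)$, $w'_i=(w_i-\mathbb E[w_i])/\operatorname{std}(w_i)$, and let $\boldsymbol\Sigma_{\mathbf z'\mathbf w'}$ be the cross-covariance matrix with entries $\mathrm{Cov}[z'_i,w'_j]$. Let $\{\mathbf u_i\}_{i=1}^M$, $\{\mathbf v_i\}_{i=1}^M$ be the left and right singular vectors of $\boldsymbol\Sigma_{\mathbf z'\mathbf w'}$. Define $m_{\mathrm{SVD}}(\mathbf z,\mathbf w)=\frac1M\sum_{i=1}^M\mathrm{Cov}[\mathbf u_i^\top\mathbf z',\mathbf v_i^\top\mathbf w']$ (equivalently, $\frac1M$ times the sum of the singular values of $\boldsymbol\Sigma_{\mathbf z'\mathbf w'}$) and $d_{\mathrm{SVD}}(\mathbf z,\mathbf w)=1-m_{\mathrm{SVD}}(\mathbf z,\mathbf w)$. *)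

theory Defs
  imports "HOL-Probability.Probability"
begin

definition expect :: "'a measure \<Rightarrow> ('a \<Rightarrow> real) \<Rightarrow> real" where
  "expect P X = integral\<^sup>L P X"

definition var :: "'a measure \<Rightarrow> ('a \<Rightarrow> real) \<Rightarrow> real" where
  "var P X = expect P (\<lambda>w. (X w - expect P X)\<^sup>2)"

definition cov :: "'a measure \<Rightarrow> ('a \<Rightarrow> real) \<Rightarrow> ('a \<Rightarrow> real) \<Rightarrow> real" where
  "cov P X Y = expect P (\<lambda>w. (X w - expect P X) * (Y w - expect P Y))"

definition unif :: "'y::finite measure" where
  "unif = measure_pmf (pmf_of_set (UNIV :: 'y set))"

definition model_p :: "('x \<Rightarrow> real^'m) \<Rightarrow> ('y::finite \<Rightarrow> real^'m) \<Rightarrow> 'x \<Rightarrow> 'y \<Rightarrow> real" where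
  "model_p f g x y = exp (f x \<bullet> g y) / (\<Sum>y'\<in>UNIV. exp (f x \<bullet> g y'))"

definition psi_x :: "'x measure \<Rightarrow> 'y \<Rightarrow> ('x \<Rightarrow> 'y \<Rightarrow> real) \<Rightarrow> 'y \<Rightarrow> real" where
  "psi_x D y0 p y = sqrt (var D (\<lambda>x. ln (p x y) - ln (p x y0)))"

definition psi_y :: "'x \<Rightarrow> ('x \<Rightarrow> 'y::finite \<Rightarrow> real) \<Rightarrow> 'x \<Rightarrow> real" where
  "psi_y x0 p x = sqrt (var unif (\<lambda>y. ln (p x y) - ln (p x0 y)))"

definition admissible ::
  "'x measure \<Rightarrow> 'x \<Rightarrow> 'y::finite \<Rightarrow> 'x set \<Rightarrow> 'y set \<Rightarrow> ('x \<Rightarrow> 'y \<Rightarrow> real) \<Rightarrow> bool" where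
  "admissible D x0 y0 XL YL p \<longleftrightarrow>
     (\<forall>x y. p x y > 0) \<and> (\<forall>x. (\<Sum>y\<in>UNIV. p x y) = 1) \<and>
     (\<forall>y. (\<lambda>x. ln (p x y)) \<in> borel_measurable D \<and> integrable D (\<lambda>x. (ln (p x y))\<^sup>2)) \<and>
     (\<forall>x\<in>XL. measure D {x} > 0) \<and>
     (\<forall>x\<in>XL - {x0}. \<not> (\<exists>c. \<forall>y. ln (p x y) - ln (p x0 y) = c)) \<and>
     (\<forall>y\<in>YL - {y0}. var D (\<lambda>x. ln (p x y) - ln (p x y0)) > 0)"

definition d_LLV ::
  "'x measure \<Rightarrow> 'x \<Rightarrow> 'y::finite \<Rightarrow> 'x set \<Rightarrow> 'y set \<Rightarrow> real \<Rightarrow>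
   ('x \<Rightarrow> 'y \<Rightarrow> real) \<Rightarrow> ('x \<Rightarrow> 'y \<Rightarrow> real) \<Rightarrow> real" where
  "d_LLV D x0 y0 XL YL lam p p' =
    (let
       t1 = Max ((\<lambda>y. max
              (sqrt (var D (\<lambda>x. ln (p x y) / psi_x D y0 p y - ln (p' x y) / psi_x D y0 p' y)))
              (sqrt (var D (\<lambda>x. ln (p x y0) / psi_x D y0 p y - ln (p' x y0) / psi_x D y0 p' y))))
              ` (YL - {y0}));
       t2 = Max ((\<lambda>x. max
              (sqrt (var unif (\<lambda>y. ln (p x y) / psi_y x0 p x - ln (p' x y) / psi_y x0 p' x)))
              (sqrt (var unif (\<lambda>y. ln (p x0 y) / psi_y x0 p x - ln (p' x0 y) / psi_y x0 p' x))))
              ` (XL - {x0}));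
       t3 = Max ((\<lambda>y. \<bar>psi_x D y0 p y - psi_x D y0 p' y\<bar>) ` (YL - {y0}));
       t4 = Max ((\<lambda>x. \<bar>psi_y x0 p x - psi_y x0 p' x\<bar>) ` (XL - {x0}))
     in Max {t1, t2, lam * t3, lam * t4})"

definition standardize :: "'a measure \<Rightarrow> ('a \<Rightarrow> real^'m) \<Rightarrow> 'a \<Rightarrow> real^'m" where
  "standardize P z w = (\<chi> i. (z w $ i - expect P (\<lambda>v. z v $ i)) / sqrt (var P (\<lambda>v. z v $ i)))"

definition cross_cov :: "'a measure \<Rightarrow> ('a \<Rightarrow> real^'m) \<Rightarrow> ('a \<Rightarrow> real^'m) \<Rightarrow> real^'m^'m" where
  "cross_cov P z w = (\<chi> i j. cov P (\<lambda>v. z v $ i) (\<lambda>v. w v $ j))"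

text \<open>\<open>m_SVD\<close>: take an SVD \<open>\<Sigma> = U S V^T\<close> of the cross-covariance of the standardized
  vectors (U, V orthogonal, S diagonal nonnegative); columns of U, V are the left/right
  singular vectors; average \<open>Cov[u_i^T z', v_i^T w']\<close>.\<close>
definition m_SVD :: "'a measure \<Rightarrow> ('a \<Rightarrow> real^'m) \<Rightarrow> ('a \<Rightarrow> real^'m) \<Rightarrow> real" where
  "m_SVD P z w =
    (let zs = standardize P z; ws = standardize P w; \<Sigma> = cross_cov P zs ws in
     THE s. \<exists>U V :: real^'m^'m.
        orthogonal_matrix U \<and> orthogonal_matrix V \<and>
        (\<forall>i j. i \<noteq> j \<longrightarrow> (transpose U ** \<Sigma> ** V) $ i $ j = 0) \<and>
        (\<forall>i. (transpose U ** \<Sigma> ** V) $ i $ i \<ge> 0) \<and>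
        s = (1 / real CARD('m)) *
            (\<Sum>i\<in>UNIV. cov P (\<lambda>v. column i U \<bullet> zs v) (\<lambda>v. column i V \<bullet> ws v)))"

definition d_SVD :: "'a measure \<Rightarrow> ('a \<Rightarrow> real^'m) \<Rightarrow> ('a \<Rightarrow> real^'m) \<Rightarrow> real" where
  "d_SVD P z w = 1 - m_SVD P z w"

end

theory Submission
  imports Defs
begin

(* The i-th coordinate of z1 is (g(y_i) - g(y0)) . f(x) = log p(y_i|x) - log p(y0|x), the
   log-partition function cancelling; z2 carries the same log-ratios for p'. On the w side the
   log-partition terms only shift coordinates by constants, which standardization removes.
   For one coordinate, the difference of the two standardized log-ratios is A - B, where A and B
   are the two quantities bounded by t1 (resp. t2), so the correlation of the coordinates is
   1 - Var(A - B)/2 >= 1 - Var A - Var B >= 1 - 2 eps^2. By von Neumann's trace inequality the sum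
   of the singular values of a matrix dominates its trace, hence m_SVD >= 1 - 2 eps^2; together
   with m_SVD >= 0 this gives d_SVD <= min 1 (2 eps^2) <= 2 eps <= 2 M eps.
   Since m_SVD is defined through an arbitrary SVD, the existence of an SVD is proved
   variationally, and the same trace inequality shows that m_SVD does not depend on the choice. *)

section \<open>Singular value decomposition\<close>

lemma orthogonal_matrix_entry_bound:
  fixes U :: "real^'n^'n"
  assumes "orthogonal_matrix U"
  shows "\<bar>U $ i $ j\<bar> \<le> 1"
proof -
  have "\<bar>row i U $ j\<bar> \<le> norm (row i U)" by (rule component_le_norm_cart)
  also have "norm (row i U) = 1" using assms orthogonal_matrix_orthonormal_rows by blast
  finally show ?thesis by (simp add: row_def)
qed

lemma compact_orthogonal_matrices: "compact {U :: real^'n^'n. orthogonal_matrix U}"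
proof (subst compact_eq_bounded_closed, intro conjI)
  have "norm U \<le> real CARD('n)" if "orthogonal_matrix U" for U :: "real^'n^'n"
  proof -
    have "norm U \<le> (\<Sum>i\<in>UNIV. norm (row i U))"
      unfolding norm_vec_def row_def vec_lambda_eta by (rule L2_set_le_sum) simp
    also have "\<dots> = real CARD('n)"
      using that by (simp add: orthogonal_matrix_orthonormal_rows)
    finally show ?thesis .
  qed
  then show "bounded {U :: real^'n^'n. orthogonal_matrix U}"
    unfolding bounded_iff by blast
next
  have "{U :: real^'n^'n. orthogonal_matrix U} =
      (\<Inter>i. \<Inter>j. {U. (\<Sum>k\<in>UNIV. U $ k $ i * U $ k $ j) = (if i = j then 1 else 0)})"
    by (auto simp: orthogonal_matrix matrix_matrix_mult_def transpose_def mat_def vec_eq_iff)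
  also have "closed \<dots>"
    by (intro closed_INT ballI closed_Collect_eq continuous_intros continuous_on_const)
  finally show "closed {U :: real^'n^'n. orthogonal_matrix U}" .
qed

lemma sum_UNIV_remove2:
  fixes h :: "'n::finite \<Rightarrow> 'a::comm_monoid_add"
  assumes "i \<noteq> j"
  shows "sum h UNIV = h i + h j + sum h (UNIV - {i, j})"
proof -
  have "sum h UNIV = h i + sum h (UNIV - {i})"
    by (simp add: sum.remove)
  also have "sum h (UNIV - {i}) = h j + sum h (UNIV - {i} - {j})"
    using assms by (subst sum.remove[of _ j]) auto
  also have "UNIV - {i} - {j} = UNIV - {i, j}" by auto
  finally show ?thesis by (simp add: add.assoc)
qed

definition givens :: "'n \<Rightarrow> 'n \<Rightarrow> real \<Rightarrow> real \<Rightarrow> real^'n^'n" where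
  "givens i j c s = (\<chi> k l. if k = i \<and> l = i then c else if k = i \<and> l = j then - s
      else if k = j \<and> l = i then s else if k = j \<and> l = j then c else if k = l then 1 else 0)"

lemma orthogonal_matrix_givens:
  fixes i j :: "'n::finite"
  assumes ij: "i \<noteq> j" and cs: "c\<^sup>2 + s\<^sup>2 = 1"
  shows "orthogonal_matrix (givens i j c s)"
  unfolding orthogonal_matrix
proof (simp add: vec_eq_iff, intro allI)
  fix k l
  let ?G = "givens i j c s"
  have "(transpose ?G ** ?G) $ k $ l = ?G $ i $ k * ?G $ i $ l + ?G $ j $ k * ?G $ j $ l +
      (\<Sum>r\<in>UNIV - {i, j}. ?G $ r $ k * ?G $ r $ l)"
    unfolding matrix_matrix_mult_def transpose_def by (simp add: sum_UNIV_remove2[OF ij])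
  also have "(\<Sum>r\<in>UNIV - {i, j}. ?G $ r $ k * ?G $ r $ l) =
      (\<Sum>r\<in>UNIV - {i, j}. if r = k then (if k = l then 1 else 0) else 0)"
    by (rule sum.cong) (auto simp: givens_def)
  also have "\<dots> = (if k = l \<and> k \<noteq> i \<and> k \<noteq> j then 1 else 0)"
    by (subst sum.delta) auto
  also have "?G $ i $ k * ?G $ i $ l + ?G $ j $ k * ?G $ j $ l + \<dots> = mat 1 $ k $ l"
    using ij cs by (auto simp: givens_def mat_def power2_eq_square algebra_simps)
  finally show "(transpose ?G ** ?G) $ k $ l = mat 1 $ k $ l" .
qed

lemma givens_mult_nth:
  fixes i j :: "'n::finite"
  assumes ij: "i \<noteq> j"
  shows "(givens i j c s ** B) $ k $ m =
    (if k = i then c * B $ i $ m - s * B $ j $ m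
     else if k = j then s * B $ i $ m + c * B $ j $ m else B $ k $ m)"
proof -
  let ?G = "givens i j c s"
  have "(?G ** B) $ k $ m = ?G $ k $ i * B $ i $ m + ?G $ k $ j * B $ j $ m +
      (\<Sum>r\<in>UNIV - {i, j}. ?G $ k $ r * B $ r $ m)"
    unfolding matrix_matrix_mult_def by (simp add: sum_UNIV_remove2[OF ij])
  also have "(\<Sum>r\<in>UNIV - {i, j}. ?G $ k $ r * B $ r $ m) =
      (\<Sum>r\<in>UNIV - {i, j}. if r = k then B $ k $ m else 0)"
    using ij by (intro sum.cong) (auto simp: givens_def)
  also have "\<dots> = (if k \<noteq> i \<and> k \<noteq> j then B $ k $ m else 0)"
    by (subst sum.delta) auto
  finally show ?thesis using ij by (auto simp: givens_def)
qed

lemma mult_givens_nth: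
  fixes i j :: "'n::finite"
  assumes ij: "i \<noteq> j"
  shows "(B ** givens i j c s) $ m $ k =
    (if k = i then c * B $ m $ i + s * B $ m $ j
     else if k = j then c * B $ m $ j - s * B $ m $ i else B $ m $ k)"
proof -
  let ?G = "givens i j c s"
  have "(B ** ?G) $ m $ k = B $ m $ i * ?G $ i $ k + B $ m $ j * ?G $ j $ k +
      (\<Sum>r\<in>UNIV - {i, j}. B $ m $ r * ?G $ r $ k)"
    unfolding matrix_matrix_mult_def by (simp add: sum_UNIV_remove2[OF ij])
  also have "(\<Sum>r\<in>UNIV - {i, j}. B $ m $ r * ?G $ r $ k) =
      (\<Sum>r\<in>UNIV - {i, j}. if r = k then B $ m $ k else 0)"
    using ij by (intro sum.cong) (auto simp: givens_def)
  also have "\<dots> = (if k \<noteq> i \<and> k \<noteq> j then B $ m $ k else 0)"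
    by (subst sum.delta) auto
  finally show ?thesis using ij by (auto simp: givens_def)
qed

definition coordinate_reflection :: "'n \<Rightarrow> real^'n^'n" where
  "coordinate_reflection i = (\<chi> k l. if k = l then (if k = i then -1 else 1) else 0)"

lemma orthogonal_matrix_coordinate_reflection:
  "orthogonal_matrix (coordinate_reflection i :: real^'n::finite^'n)"
  unfolding orthogonal_matrix
proof (simp add: vec_eq_iff, intro allI)
  fix k l :: 'n
  have "\<And>r. coordinate_reflection i $ r $ k * coordinate_reflection i $ r $ l =
      (if r = k then (if k = l then 1 else 0) else (0::real))"
    by (auto simp: coordinate_reflection_def)
  then have "(transpose (coordinate_reflection i) ** coordinate_reflection i) $ k $ l =
      (\<Sum>r\<in>UNIV. if r = k then (if k = l then 1 else 0) else (0::real))"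
    by (simp add: matrix_matrix_mult_def transpose_def)
  also have "\<dots> = mat 1 $ k $ l" by (subst sum.delta) (auto simp: mat_def)
  finally show "(transpose (coordinate_reflection i) ** coordinate_reflection i) $ k $ l = mat 1 $ k $ l" .
qed

lemma coordinate_reflection_mult_nth:
  "(coordinate_reflection i ** B) $ k $ m = (if k = i then - B $ k $ m else (B :: real^'n::finite^'n) $ k $ m)"
proof -
  have "\<And>r. coordinate_reflection i $ k $ r * B $ r $ m =
      (if r = k then (if k = i then - B $ k $ m else B $ k $ m) else 0)"
    by (auto simp: coordinate_reflection_def)
  then have "(coordinate_reflection i ** B) $ k $ m =
      (\<Sum>r\<in>UNIV. if r = k then (if k = i then - B $ k $ m else B $ k $ m) else 0)"
    by (simp add: matrix_matrix_mult_def)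
  also have "\<dots> = (if k = i then - B $ k $ m else B $ k $ m)" by (subst sum.delta) auto
  finally show ?thesis .
qed

(* A maximiser of weighted_trace w (P ** A ** Q) over orthogonal P, Q, for distinct positive
   weights w, is diagonal with nonnegative diagonal: otherwise a Givens rotation on one side or a
   coordinate reflection would increase it. *)
definition weighted_trace :: "('n \<Rightarrow> real) \<Rightarrow> real^'n^'n \<Rightarrow> real" where
  "weighted_trace w B = (\<Sum>k\<in>UNIV. w k * B $ k $ k)"

lemma weighted_trace_two_diag_changes:
  fixes B B' :: "real^'n::finite^'n"
  assumes ij: "i \<noteq> j" and same: "\<And>k. k \<noteq> i \<Longrightarrow> k \<noteq> j \<Longrightarrow> B' $ k $ k = B $ k $ k"
  shows "weighted_trace w B' =
    weighted_trace w B + w i * (B' $ i $ i - B $ i $ i) + w j * (B' $ j $ j - B $ j $ j)"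
proof -
  have "(\<Sum>k\<in>UNIV - {i, j}. w k * B' $ k $ k) = (\<Sum>k\<in>UNIV - {i, j}. w k * B $ k $ k)"
    using same by (intro sum.cong) auto
  then show ?thesis
    unfolding weighted_trace_def by (simp add: sum_UNIV_remove2[OF ij] algebra_simps)
qed

lemma weighted_trace_givens_mult:
  fixes i j :: "'n::finite"
  assumes "i \<noteq> j"
  shows "weighted_trace w (givens i j c s ** B) = weighted_trace w B
    + (c - 1) * (w i * B $ i $ i + w j * B $ j $ j) + s * (w j * B $ i $ j - w i * B $ j $ i)"
  using weighted_trace_two_diag_changes[OF assms, of "givens i j c s ** B" B w] assms
  by (simp add: givens_mult_nth algebra_simps)

lemma weighted_trace_mult_givens:
  fixes i j :: "'n::finite"
  assumes "i \<noteq> j"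
  shows "weighted_trace w (B ** givens i j c s) = weighted_trace w B
    + (c - 1) * (w i * B $ i $ i + w j * B $ j $ j) + s * (w i * B $ i $ j - w j * B $ j $ i)"
  using weighted_trace_two_diag_changes[OF assms, of "B ** givens i j c s" B w] assms
  by (simp add: mult_givens_nth algebra_simps)

lemma weighted_trace_coordinate_reflection_mult:
  "weighted_trace w (coordinate_reflection i ** B) = weighted_trace w B - 2 * w i * B $ i $ i"
proof -
  have "(\<Sum>k\<in>UNIV - {i}. w k * (coordinate_reflection i ** B) $ k $ k) =
      (\<Sum>k\<in>UNIV - {i}. w k * B $ k $ k)"
    by (intro sum.cong) (auto simp: coordinate_reflection_mult_nth)
  then show ?thesis
    unfolding weighted_trace_def
    by (simp add: sum.remove[of UNIV i] coordinate_reflection_mult_nth)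
qed

lemma unit_circle_stationary:
  fixes a b :: real
  assumes "\<And>c s. c\<^sup>2 + s\<^sup>2 = 1 \<Longrightarrow> (c - 1) * a + s * b \<le> 0"
  shows "b = 0"
proof -
  have quadratic: "b * t \<le> a * t\<^sup>2" for t
  proof -
    define q where "q = 1 + t\<^sup>2"
    have q: "q > 0" unfolding q_def by (simp add: add_pos_nonneg)
    \<comment> \<open>rational parametrisation of the unit circle\<close>
    have "((1 - t\<^sup>2) / q)\<^sup>2 + (2 * t / q)\<^sup>2 = 1"
      using q by (simp add: q_def divide_simps) (simp add: power2_eq_square algebra_simps)
    from assms[OF this] have "((1 - t\<^sup>2) / q - 1) * a + 2 * t / q * b \<le> 0" .
    also have "(1 - t\<^sup>2) / q - 1 = - 2 * t\<^sup>2 / q"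
      using q by (simp add: q_def field_simps)
    also have "- 2 * t\<^sup>2 / q * a + 2 * t / q * b = 2 * (b * t - a * t\<^sup>2) / q"
      using q by (simp add: field_simps)
    finally show ?thesis using q by (simp add: divide_le_0_iff)
  qed
  define t where "t = b / (\<bar>a\<bar> + 1)"
  have "(\<bar>a\<bar> + 1) * t = b"
    unfolding t_def by (simp add: add_pos_nonneg)
  then have "(\<bar>a\<bar> + 1) * t\<^sup>2 = b * t"
    by (metis mult.assoc power2_eq_square)
  also have "\<dots> \<le> a * t\<^sup>2" by (rule quadratic)
  also have "\<dots> \<le> \<bar>a\<bar> * t\<^sup>2" by (simp add: mult_right_mono)
  finally have "t = 0" by (simp add: algebra_simps)
  then show "b = 0" unfolding t_def by (simp add: add_nonneg_eq_0_iff)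
qed

lemma weighted_trace_maximizer_exists:
  fixes A :: "real^'n^'n"
  obtains P Q where "orthogonal_matrix P" "orthogonal_matrix Q"
    "\<And>P' Q'. orthogonal_matrix P' \<Longrightarrow> orthogonal_matrix Q' \<Longrightarrow>
       weighted_trace w (P' ** A ** Q') \<le> weighted_trace w (P ** A ** Q)"
proof -
  let ?O = "{U :: real^'n^'n. orthogonal_matrix U}"
  have "compact (?O \<times> ?O)" by (intro compact_Times compact_orthogonal_matrices)
  moreover have "?O \<times> ?O \<noteq> {}" using orthogonal_matrix_id by blast
  moreover have "continuous_on (?O \<times> ?O) (\<lambda>PQ. weighted_trace w (fst PQ ** A ** snd PQ))"
    unfolding weighted_trace_def matrix_matrix_mult_def by (intro continuous_intros)
  ultimately obtain PQ where "PQ \<in> ?O \<times> ?O"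
    and "\<forall>PQ' \<in> ?O \<times> ?O. weighted_trace w (fst PQ' ** A ** snd PQ') \<le> weighted_trace w (fst PQ ** A ** snd PQ)"
    using continuous_attains_sup by blast
  then show thesis using that[of "fst PQ" "snd PQ"] by auto
qed

lemma weighted_trace_maximal_imp_diag_nonneg:
  assumes "w i > 0"
    and "\<And>R. orthogonal_matrix R \<Longrightarrow> weighted_trace w (R ** B) \<le> weighted_trace w B"
  shows "B $ i $ i \<ge> 0"
proof -
  have "w i * B $ i $ i \<ge> 0"
    using assms(2)[OF orthogonal_matrix_coordinate_reflection[of i]]
    by (simp add: weighted_trace_coordinate_reflection_mult)
  with assms(1) show ?thesis by (simp add: zero_le_mult_iff)
qed

lemma weighted_trace_maximal_imp_offdiag_zero:
  fixes B :: "real^'n::finite^'n"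
  assumes ij: "i \<noteq> j" and w: "w i > 0" "w j > 0" "w i \<noteq> w j"
    and left: "\<And>R. orthogonal_matrix R \<Longrightarrow> weighted_trace w (R ** B) \<le> weighted_trace w B"
    and right: "\<And>R. orthogonal_matrix R \<Longrightarrow> weighted_trace w (B ** R) \<le> weighted_trace w B"
  shows "B $ i $ j = 0"
proof -
  have "w j * B $ i $ j - w i * B $ j $ i = 0"
    by (rule unit_circle_stationary[where a = "w i * B $ i $ i + w j * B $ j $ j"])
      (use left[OF orthogonal_matrix_givens[OF ij]] in \<open>simp add: weighted_trace_givens_mult[OF ij]\<close>)
  moreover have "w i * B $ i $ j - w j * B $ j $ i = 0"
    by (rule unit_circle_stationary[where a = "w i * B $ i $ i + w j * B $ j $ j"])
      (use right[OF orthogonal_matrix_givens[OF ij]] in \<open>simp add: weighted_trace_mult_givens[OF ij]\<close>)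
  ultimately have "(w i + w j) * (B $ i $ j - B $ j $ i) = 0" "(w j - w i) * (B $ i $ j + B $ j $ i) = 0"
    by (simp_all add: algebra_simps)
  with w show ?thesis by simp
qed

definition is_svd :: "real^'n^'n \<Rightarrow> real^'n^'n \<Rightarrow> real^'n^'n \<Rightarrow> bool" where
  "is_svd A U V \<longleftrightarrow> orthogonal_matrix U \<and> orthogonal_matrix V \<and>
     (\<forall>i j. i \<noteq> j \<longrightarrow> (transpose U ** A ** V) $ i $ j = 0) \<and>
     (\<forall>i. (transpose U ** A ** V) $ i $ i \<ge> 0)"

lemma is_svd_exists: "\<exists>U V. is_svd (A :: real^'n::finite^'n) U V"
proof -
  obtain h :: "'n \<Rightarrow> nat" where "inj h"
    using finite_imp_inj_to_nat_seg[of "UNIV :: 'n set"] by auto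
  define w where "w k = real (h k) + 1" for k
  have w_pos: "w k > 0" for k unfolding w_def by simp
  have w_inj: "w i \<noteq> w j" if "i \<noteq> j" for i j
    using \<open>inj h\<close> that unfolding w_def inj_def by auto
  obtain P Q where P: "orthogonal_matrix P" and Q: "orthogonal_matrix Q"
    and max: "\<And>P' Q'. orthogonal_matrix P' \<Longrightarrow> orthogonal_matrix Q' \<Longrightarrow>
       weighted_trace w (P' ** A ** Q') \<le> weighted_trace w (P ** A ** Q)"
    using weighted_trace_maximizer_exists by blast
  define B where "B = P ** A ** Q"
  have left: "weighted_trace w (R ** B) \<le> weighted_trace w B" if "orthogonal_matrix R" for R
    using max[OF orthogonal_matrix_mul[OF that P] Q] by (simp add: B_def matrix_mul_assoc)
  have right: "weighted_trace w (B ** R) \<le> weighted_trace w B" if "orthogonal_matrix R" for R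
    using max[OF P orthogonal_matrix_mul[OF Q that]] by (simp add: B_def matrix_mul_assoc)
  have "is_svd A (transpose P) Q"
    unfolding is_svd_def using P Q
      weighted_trace_maximal_imp_offdiag_zero[OF _ w_pos w_pos w_inj left right]
      weighted_trace_maximal_imp_diag_nonneg[OF w_pos left]
    by (simp add: B_def)
  then show ?thesis by blast
qed

lemma trace_diagonal_mult:
  fixes D M :: "real^'n::finite^'n"
  assumes "\<And>i j. i \<noteq> j \<Longrightarrow> D $ i $ j = 0"
  shows "trace (D ** M) = (\<Sum>a\<in>UNIV. D $ a $ a * M $ a $ a)"
proof -
  have "(D ** M) $ a $ a = (\<Sum>b\<in>UNIV. if b = a then D $ a $ a * M $ a $ a else 0)" for a
    unfolding matrix_matrix_mult_def vec_lambda_beta using assms by (intro sum.cong) auto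
  then show ?thesis by (simp add: trace_def)
qed

(* von Neumann's trace inequality, in the form needed to see that the trace of the diagonal factor
   does not depend on the chosen SVD *)
lemma trace_le_is_svd:
  fixes A :: "real^'n::finite^'n"
  assumes svd: "is_svd A U V" and P: "orthogonal_matrix P" and Q: "orthogonal_matrix Q"
  shows "trace (P ** A ** Q) \<le> trace (transpose U ** A ** V)"
proof -
  define D where "D = transpose U ** A ** V"
  have U: "orthogonal_matrix U" and V: "orthogonal_matrix V" using svd by (auto simp: is_svd_def)
  have "U ** D ** transpose V = (U ** transpose U) ** A ** (V ** transpose V)"
    unfolding D_def by (simp add: matrix_mul_assoc)
  then have A: "A = U ** D ** transpose V"
    using U V by (simp add: orthogonal_matrix_def)
  define R where "R = transpose V ** Q ** P ** U"
  have R: "orthogonal_matrix R"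
    unfolding R_def using U V P Q by (intro orthogonal_matrix_mul) auto
  have "trace (P ** A ** Q) = trace ((P ** U) ** (D ** transpose V ** Q))"
    unfolding A by (simp add: matrix_mul_assoc)
  also have "\<dots> = trace (D ** R)"
    unfolding trace_mul_sym[of "P ** U"] R_def by (simp add: matrix_mul_assoc)
  also have "\<dots> = (\<Sum>a\<in>UNIV. D $ a $ a * R $ a $ a)"
    by (rule trace_diagonal_mult) (use svd in \<open>simp add: is_svd_def D_def\<close>)
  also have "\<dots> \<le> (\<Sum>a\<in>UNIV. D $ a $ a)"
  proof (rule sum_mono)
    fix a
    have "D $ a $ a \<ge> 0" using svd by (simp add: is_svd_def D_def)
    moreover have "R $ a $ a \<le> 1" using orthogonal_matrix_entry_bound[OF R, of a a] by simp
    ultimately show "D $ a $ a * R $ a $ a \<le> D $ a $ a"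
      using mult_left_mono[of "R $ a $ a" 1 "D $ a $ a"] by simp
  qed
  also have "\<dots> = trace D" by (simp add: trace_def)
  finally show ?thesis unfolding D_def .
qed

lemma is_svd_trace_unique:
  assumes "is_svd A U V" "is_svd A U' V'"
  shows "trace (transpose U ** A ** V) = trace (transpose U' ** A ** V')"
  using assms by (intro antisym trace_le_is_svd) (auto simp: is_svd_def)

section \<open>Second moments\<close>

lemma abs_mult_le_sum_squares: "\<bar>x * y\<bar> \<le> x\<^sup>2 + (y::real)\<^sup>2"
proof -
  have "2 * \<bar>x\<bar> * \<bar>y\<bar> \<le> x\<^sup>2 + y\<^sup>2" using sum_squares_bound[of "\<bar>x\<bar>" "\<bar>y\<bar>"] by simp
  moreover have "0 \<le> \<bar>x\<bar> * \<bar>y\<bar>" by simp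
  ultimately show ?thesis unfolding abs_mult by linarith
qed

definition square_integrable :: "'a measure \<Rightarrow> ('a \<Rightarrow> real) \<Rightarrow> bool" where
  "square_integrable M X \<longleftrightarrow> X \<in> borel_measurable M \<and> integrable M (\<lambda>v. (X v)\<^sup>2)"

lemma square_integrable_mult:
  "square_integrable M X \<Longrightarrow> square_integrable M Y \<Longrightarrow> integrable M (\<lambda>v. X v * Y v)"
  unfolding square_integrable_def
  by (rule Bochner_Integration.integrable_bound[of M "\<lambda>v. (X v)\<^sup>2 + (Y v)\<^sup>2"])
    (auto simp: abs_mult_le_sum_squares)

lemma square_integrable_add:
  assumes X: "square_integrable M X" and Y: "square_integrable M Y"
  shows "square_integrable M (\<lambda>v. X v + Y v)"
proof -
  have [measurable]: "X \<in> borel_measurable M" "Y \<in> borel_measurable M"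
    using X Y unfolding square_integrable_def by auto
  have "integrable M (\<lambda>v. (X v)\<^sup>2 + 2 * (X v * Y v) + (Y v)\<^sup>2)"
    using X Y square_integrable_mult[OF X Y] unfolding square_integrable_def by auto
  then have "integrable M (\<lambda>v. (X v + Y v)\<^sup>2)"
    by (simp add: power2_sum algebra_simps)
  then show ?thesis unfolding square_integrable_def by simp
qed

lemma square_integrable_cmult:
  assumes "square_integrable M X"
  shows "square_integrable M (\<lambda>v. c * X v)"
proof -
  have [measurable]: "X \<in> borel_measurable M" using assms unfolding square_integrable_def by auto
  have "(\<lambda>v. c * X v) \<in> borel_measurable M" by measurable
  then show ?thesis using assms unfolding square_integrable_def by (simp add: power_mult_distrib)
qed

lemma square_integrable_diff:
  assumes "square_integrable M X" "square_integrable M Y"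
  shows "square_integrable M (\<lambda>v. X v - Y v)"
  using square_integrable_add[OF assms(1) square_integrable_cmult[OF assms(2), of "-1"]] by simp

lemma square_integrable_sum:
  "finite I \<Longrightarrow> (\<And>i. i \<in> I \<Longrightarrow> square_integrable M (X i)) \<Longrightarrow>
    square_integrable M (\<lambda>v. \<Sum>i\<in>I. X i v)"
proof (induction I rule: finite_induct)
  case empty
  then show ?case by (simp add: square_integrable_def)
next
  case (insert i I)
  then show ?case by (simp add: square_integrable_add)
qed

lemma var_eq_cov: "var M X = cov M X X"
  unfolding var_def cov_def by (simp add: power2_eq_square)

lemma cov_commute: "cov M X Y = cov M Y X"
  unfolding cov_def by (simp add: mult.commute)

lemma var_nonneg: "var M X \<ge> 0"
  unfolding var_def expect_def by (rule integral_nonneg_AE) auto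

lemma expect_add:
  "integrable M X \<Longrightarrow> integrable M Y \<Longrightarrow> expect M (\<lambda>v. X v + Y v) = expect M X + expect M Y"
  unfolding expect_def by simp

lemma cov_cmult_left: "cov M (\<lambda>v. a * X v) Y = a * cov M X Y"
  unfolding cov_def expect_def by (simp add: right_diff_distrib[symmetric] mult.assoc)

definition zscore :: "'a measure \<Rightarrow> ('a \<Rightarrow> real) \<Rightarrow> 'a \<Rightarrow> real" where
  "zscore M X v = (X v - expect M X) / sqrt (var M X)"

lemma standardize_nth: "standardize M z v $ i = zscore M (\<lambda>v. z v $ i) v"
  by (simp add: standardize_def zscore_def)

context prob_space
begin

lemma square_integrable_const: "square_integrable M (\<lambda>v. c)"
  unfolding square_integrable_def by simp

lemma square_integrable_imp_integrable: "square_integrable M X \<Longrightarrow> integrable M X"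
  unfolding square_integrable_def by (blast intro: square_integrable_imp_integrable)

lemma square_integrable_affine:
  "square_integrable M X \<Longrightarrow> square_integrable M (\<lambda>v. a * X v + c)"
  by (intro square_integrable_add square_integrable_cmult square_integrable_const)

lemma square_integrable_zscore: "square_integrable M X \<Longrightarrow> square_integrable M (zscore M X)"
  using square_integrable_affine[of X "1 / sqrt (var M X)" "- expect M X / sqrt (var M X)"]
  unfolding zscore_def by (simp add: diff_divide_distrib)

lemma expect_add_const: "integrable M X \<Longrightarrow> expect M (\<lambda>v. X v + c) = expect M X + c"
  unfolding expect_def by (simp add: prob_space)

lemma cov_add_const_left: "integrable M X \<Longrightarrow> cov M (\<lambda>v. X v + c) Y = cov M X Y"
  unfolding cov_def by (simp add: expect_add_const)

lemma var_add_const: "integrable M X \<Longrightarrow> var M (\<lambda>v. X v + c) = var M X"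
  unfolding var_def by (simp add: expect_add_const)

lemma cov_add_left:
  assumes X: "square_integrable M X" and Y: "square_integrable M Y" and Z: "square_integrable M Z"
  shows "cov M (\<lambda>v. X v + Y v) Z = cov M X Z + cov M Y Z"
proof -
  let ?cX = "\<lambda>v. X v - expect M X" and ?cY = "\<lambda>v. Y v - expect M Y" and ?cZ = "\<lambda>v. Z v - expect M Z"
  have centered: "square_integrable M ?cX" "square_integrable M ?cY" "square_integrable M ?cZ"
    using X Y Z by (simp_all add: square_integrable_diff square_integrable_const)
  have "expect M (\<lambda>v. X v + Y v) = expect M X + expect M Y"
    using X Y by (simp add: expect_add square_integrable_imp_integrable)
  then have "cov M (\<lambda>v. X v + Y v) Z = expect M (\<lambda>v. ?cX v * ?cZ v + ?cY v * ?cZ v)"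
    unfolding cov_def by (simp add: algebra_simps)
  also have "\<dots> = cov M X Z + cov M Y Z"
    unfolding cov_def by (intro expect_add square_integrable_mult centered)
  finally show ?thesis .
qed

lemma cov_linear2_left:
  assumes "square_integrable M X" "square_integrable M Y" "square_integrable M Z"
  shows "cov M (\<lambda>v. a * X v + b * Y v) Z = a * cov M X Z + b * cov M Y Z"
  using cov_add_left[OF square_integrable_cmult[OF assms(1)] square_integrable_cmult[OF assms(2)] assms(3)]
  by (simp add: cov_cmult_left)

lemma var_linear2:
  assumes X: "square_integrable M X" and Y: "square_integrable M Y"
  shows "var M (\<lambda>v. a * X v + b * Y v) = a\<^sup>2 * var M X + b\<^sup>2 * var M Y + 2 * a * b * cov M X Y"
proof -
  let ?H = "\<lambda>v. a * X v + b * Y v"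
  have H: "square_integrable M ?H"
    using X Y by (intro square_integrable_add square_integrable_cmult)
  have HX: "cov M X ?H = a * cov M X X + b * cov M X Y"
    using cov_linear2_left[OF X Y X, of a b] by (simp only: cov_commute[of M X ?H] cov_commute[of M Y X])
  have HY: "cov M Y ?H = a * cov M X Y + b * cov M Y Y"
    using cov_linear2_left[OF X Y Y, of a b] by (simp only: cov_commute[of M Y ?H])
  show ?thesis
    unfolding var_eq_cov using cov_linear2_left[OF X Y H, of a b] HX HY
    by (simp add: power2_eq_square algebra_simps)
qed

lemma cov_sum_left:
  assumes "finite I" "\<And>i. i \<in> I \<Longrightarrow> square_integrable M (X i)" "square_integrable M Z"
  shows "cov M (\<lambda>v. \<Sum>i\<in>I. c i * X i v) Z = (\<Sum>i\<in>I. c i * cov M (X i) Z)"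
  using assms
proof (induction I rule: finite_induct)
  case empty
  then show ?case unfolding cov_def expect_def by simp
next
  case (insert a I)
  have "square_integrable M (\<lambda>v. \<Sum>i\<in>I. c i * X i v)"
    using insert by (intro square_integrable_sum square_integrable_cmult) auto
  with insert show ?case
    using cov_add_left[OF square_integrable_cmult[of M "X a" "c a"]] by (simp add: cov_cmult_left)
qed

lemma cov_sum_sum:
  assumes "finite I" "finite J"
    and X: "\<And>i. i \<in> I \<Longrightarrow> square_integrable M (X i)"
    and Y: "\<And>j. j \<in> J \<Longrightarrow> square_integrable M (Y j)"
  shows "cov M (\<lambda>v. \<Sum>i\<in>I. c i * X i v) (\<lambda>v. \<Sum>j\<in>J. d j * Y j v) =
    (\<Sum>i\<in>I. \<Sum>j\<in>J. c i * d j * cov M (X i) (Y j))"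
proof -
  let ?W = "\<lambda>v. \<Sum>j\<in>J. d j * Y j v"
  have W: "square_integrable M ?W"
    using assms by (intro square_integrable_sum square_integrable_cmult) auto
  have "cov M (\<lambda>v. \<Sum>i\<in>I. c i * X i v) ?W = (\<Sum>i\<in>I. c i * cov M (X i) ?W)"
    by (rule cov_sum_left[OF assms(1) X W])
  also have "\<dots> = (\<Sum>i\<in>I. c i * (\<Sum>j\<in>J. d j * cov M (Y j) (X i)))"
    by (intro sum.cong refl arg_cong2[where f = "(*)"])
      (subst cov_commute, rule cov_sum_left[OF assms(2) Y X])
  also have "\<dots> = (\<Sum>i\<in>I. \<Sum>j\<in>J. c i * d j * cov M (X i) (Y j))"
    by (simp add: sum_distrib_left mult.assoc cov_commute[of M "Y _" "X _"])
  finally show ?thesis .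
qed

lemma zscore_add_const: "integrable M X \<Longrightarrow> zscore M (\<lambda>v. X v + c) = zscore M X"
  by (simp add: zscore_def fun_eq_iff expect_add_const var_add_const)

lemma cov_zscore_left:
  assumes "integrable M X"
  shows "cov M (zscore M X) Y = cov M X Y / sqrt (var M X)"
proof -
  have "zscore M X = (\<lambda>v. (1 / sqrt (var M X)) * X v + - expect M X / sqrt (var M X))"
    by (simp add: zscore_def fun_eq_iff diff_divide_distrib)
  then have "cov M (zscore M X) Y = cov M (\<lambda>v. (1 / sqrt (var M X)) * X v) Y"
    using assms by (simp only: cov_add_const_left integrable_mult_right)
  also have "\<dots> = (1 / sqrt (var M X)) * cov M X Y"
    by (rule cov_cmult_left)
  finally show ?thesis by simp
qed

lemma cov_zscore:
  assumes "integrable M X" "integrable M Y"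
  shows "cov M (zscore M X) (zscore M Y) = cov M X Y / (sqrt (var M X) * sqrt (var M Y))"
proof -
  have "cov M (zscore M X) (zscore M Y) = cov M X (zscore M Y) / sqrt (var M X)"
    by (rule cov_zscore_left[OF assms(1)])
  also have "cov M X (zscore M Y) = cov M Y X / sqrt (var M Y)"
    by (subst cov_commute) (rule cov_zscore_left[OF assms(2)])
  finally show ?thesis by (simp add: cov_commute[of M Y X])
qed

lemma cov_zscore_diff_ge:
  assumes X1: "square_integrable M X1" and X2: "square_integrable M X2"
    and Y1: "square_integrable M Y1" and Y2: "square_integrable M Y2"
    and pos: "var M (\<lambda>v. X1 v - X2 v) > 0" "var M (\<lambda>v. Y1 v - Y2 v) > 0"
  defines "s1 \<equiv> sqrt (var M (\<lambda>v. X1 v - X2 v))" and "s2 \<equiv> sqrt (var M (\<lambda>v. Y1 v - Y2 v))"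
  shows "cov M (zscore M (\<lambda>v. X1 v - X2 v)) (zscore M (\<lambda>v. Y1 v - Y2 v)) \<ge>
    1 - var M (\<lambda>v. X1 v / s1 - Y1 v / s2) - var M (\<lambda>v. X2 v / s1 - Y2 v / s2)"
proof -
  define d1 where "d1 = (\<lambda>v. X1 v - X2 v)"
  define d2 where "d2 = (\<lambda>v. Y1 v - Y2 v)"
  define A where "A = (\<lambda>v. X1 v / s1 - Y1 v / s2)"
  define B where "B = (\<lambda>v. X2 v / s1 - Y2 v / s2)"
  have d: "square_integrable M d1" "square_integrable M d2"
    unfolding d1_def d2_def using X1 X2 Y1 Y2 by (auto intro: square_integrable_diff)
  have "A = (\<lambda>v. (1 / s1) * X1 v - (1 / s2) * Y1 v)" "B = (\<lambda>v. (1 / s1) * X2 v - (1 / s2) * Y2 v)"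
    by (simp_all add: A_def B_def fun_eq_iff)
  then have AB: "square_integrable M A" "square_integrable M B"
    by (simp_all only:) (intro square_integrable_diff square_integrable_cmult X1 X2 Y1 Y2)+
  have s: "s1 > 0" "s1\<^sup>2 = var M d1" "s2 > 0" "s2\<^sup>2 = var M d2" "var M d1 > 0" "var M d2 > 0"
    using pos unfolding s1_def s2_def d1_def d2_def by auto
  let ?\<rho> = "cov M (zscore M d1) (zscore M d2)"
  have \<rho>: "?\<rho> = cov M d1 d2 / (s1 * s2)"
    using d s1_def s2_def unfolding d1_def d2_def
    by (simp add: cov_zscore square_integrable_imp_integrable)
  have "(\<lambda>v. (1 / s1) * d1 v + (- 1 / s2) * d2 v) = (\<lambda>v. 1 * A v + (- 1) * B v)"
    by (simp add: fun_eq_iff A_def B_def d1_def d2_def diff_divide_distrib)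
  \<comment> \<open>2 - 2 \<rho> = Var (A - B) \<le> Var (A - B) + Var (A + B) = 2 Var A + 2 Var B\<close>
  then have "var M (\<lambda>v. (1 / s1) * d1 v + (- 1 / s2) * d2 v) = var M A + var M B - 2 * cov M A B"
    using var_linear2[OF AB, of 1 "- 1"] by simp
  moreover have "var M (\<lambda>v. (1 / s1) * d1 v + (- 1 / s2) * d2 v) = 2 - 2 * ?\<rho>"
    using var_linear2[OF d, of "1 / s1" "- 1 / s2"] s \<rho> by (simp add: power_divide)
  moreover have "0 \<le> var M A + var M B + 2 * cov M A B"
    using var_linear2[OF AB, of 1 1] var_nonneg[of M "\<lambda>v. 1 * A v + 1 * B v"] by simp
  ultimately have "?\<rho> \<ge> 1 - var M A - var M B" by linarith
  then show ?thesis unfolding A_def B_def d1_def d2_def .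
qed

end

section \<open>SVD similarity of random vectors\<close>

lemma cov_inner_columns_eq_nth:
  fixes z w :: "'a \<Rightarrow> real^'n::finite"
  assumes P: "prob_space P"
    and z: "\<And>a. square_integrable P (\<lambda>v. z v $ a)" and w: "\<And>b. square_integrable P (\<lambda>v. w v $ b)"
  shows "cov P (\<lambda>v. column i U \<bullet> z v) (\<lambda>v. column i V \<bullet> w v) =
    (transpose U ** cross_cov P z w ** V) $ i $ i"
proof -
  have "cov P (\<lambda>v. column i U \<bullet> z v) (\<lambda>v. column i V \<bullet> w v) =
      cov P (\<lambda>v. \<Sum>a\<in>UNIV. U $ a $ i * z v $ a) (\<lambda>v. \<Sum>b\<in>UNIV. V $ b $ i * w v $ b)"
    by (simp add: inner_vec_def column_def)
  also have "\<dots> = (\<Sum>a\<in>UNIV. \<Sum>b\<in>UNIV. U $ a $ i * V $ b $ i * cov P (\<lambda>v. z v $ a) (\<lambda>v. w v $ b))"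
    by (rule prob_space.cov_sum_sum[OF P]) (use z w in auto)
  also have "\<dots> = (\<Sum>b\<in>UNIV. \<Sum>a\<in>UNIV. U $ a $ i * cross_cov P z w $ a $ b * V $ b $ i)"
    by (subst sum.swap) (simp add: cross_cov_def mult_ac)
  also have "\<dots> = (transpose U ** cross_cov P z w ** V) $ i $ i"
    by (simp add: matrix_matrix_mult_def transpose_def sum_distrib_right)
  finally show ?thesis .
qed

lemma square_integrable_standardize:
  assumes "prob_space P" "square_integrable P (\<lambda>v. z v $ i)"
  shows "square_integrable P (\<lambda>v. standardize P z v $ i)"
  unfolding standardize_nth using prob_space.square_integrable_zscore[OF assms] by simp

lemma m_SVD_eq_trace:
  fixes z w :: "'a \<Rightarrow> real^'m::finite"
  assumes P: "prob_space P"
    and z: "\<And>i. square_integrable P (\<lambda>v. z v $ i)" and w: "\<And>i. square_integrable P (\<lambda>v. w v $ i)"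
    and svd: "is_svd (cross_cov P (standardize P z) (standardize P w)) U V"
  shows "m_SVD P z w =
    trace (transpose U ** cross_cov P (standardize P z) (standardize P w) ** V) / CARD('m)"
proof -
  let ?S = "cross_cov P (standardize P z) (standardize P w)"
  have sum_eq: "(\<Sum>i\<in>UNIV. cov P (\<lambda>v. column i U' \<bullet> standardize P z v) (\<lambda>v. column i V' \<bullet> standardize P w v))
      = trace (transpose U' ** ?S ** V')" for U' V' :: "real^'m^'m"
    unfolding trace_def
    by (simp add: cov_inner_columns_eq_nth[OF P square_integrable_standardize[OF P z] square_integrable_standardize[OF P w]])
  have "m_SVD P z w = (THE s. \<exists>U V. is_svd ?S U V \<and> s = 1 / real CARD('m) * trace (transpose U ** ?S ** V))"
    unfolding m_SVD_def Let_def is_svd_def sum_eq conj_assoc ..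
  also have "\<dots> = trace (transpose U ** ?S ** V) / CARD('m)"
    by (rule the_equality) (use svd in \<open>auto dest: is_svd_trace_unique\<close>)
  finally show ?thesis .
qed

lemma m_SVD_nonneg:
  fixes z w :: "'a \<Rightarrow> real^'m::finite"
  assumes "prob_space P"
    and "\<And>i. square_integrable P (\<lambda>v. z v $ i)" "\<And>i. square_integrable P (\<lambda>v. w v $ i)"
  shows "m_SVD P z w \<ge> 0"
proof -
  obtain U V where svd: "is_svd (cross_cov P (standardize P z) (standardize P w)) U V"
    using is_svd_exists by blast
  then show ?thesis
    unfolding m_SVD_eq_trace[OF assms svd] trace_def is_svd_def by (simp add: sum_nonneg)
qed

lemma trace_le_m_SVD:
  fixes z w :: "'a \<Rightarrow> real^'m::finite"
  assumes "prob_space P"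
    and "\<And>i. square_integrable P (\<lambda>v. z v $ i)" "\<And>i. square_integrable P (\<lambda>v. w v $ i)"
  shows "trace (cross_cov P (standardize P z) (standardize P w)) / CARD('m) \<le> m_SVD P z w"
proof -
  let ?S = "cross_cov P (standardize P z) (standardize P w)"
  obtain U V where svd: "is_svd ?S U V"
    using is_svd_exists by blast
  have "trace ?S = trace (mat 1 ** ?S ** mat 1)" by simp
  also have "\<dots> \<le> trace (transpose U ** ?S ** V)"
    by (rule trace_le_is_svd[OF svd orthogonal_matrix_id orthogonal_matrix_id])
  finally show ?thesis
    unfolding m_SVD_eq_trace[OF assms svd] by (simp add: divide_right_mono)
qed

lemma d_SVD_le_of_coordinate_cov:
  fixes z w :: "'a \<Rightarrow> real^'m::finite"
  assumes P: "prob_space P"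
    and z: "\<And>i. square_integrable P (\<lambda>v. z v $ i)" and w: "\<And>i. square_integrable P (\<lambda>v. w v $ i)"
    and cov: "\<And>i. cov P (zscore P (\<lambda>v. z v $ i)) (zscore P (\<lambda>v. w v $ i)) \<ge> 1 - \<delta>"
  shows "d_SVD P z w \<le> \<delta>"
proof -
  have "(\<Sum>i\<in>(UNIV :: 'm set). 1 - \<delta>) \<le>
      (\<Sum>i\<in>UNIV. cov P (zscore P (\<lambda>v. z v $ i)) (zscore P (\<lambda>v. w v $ i)))"
    by (rule sum_mono) (rule cov)
  then have "real CARD('m) * (1 - \<delta>) \<le> trace (cross_cov P (standardize P z) (standardize P w))"
    by (simp add: trace_def cross_cov_def standardize_nth)
  then have "1 - \<delta> \<le> trace (cross_cov P (standardize P z) (standardize P w)) / CARD('m)"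
    by (simp add: pos_le_divide_eq mult.commute)
  with trace_le_m_SVD[OF P z w] show ?thesis unfolding d_SVD_def by linarith
qed

lemma d_SVD_le_of_log_ratio_coordinates:
  fixes z w :: "'a \<Rightarrow> real^'m::finite"
  assumes P: "prob_space P"
    and sq: "\<And>i. square_integrable P (X1 i)" "\<And>i. square_integrable P (X2 i)"
      "\<And>i. square_integrable P (Y1 i)" "\<And>i. square_integrable P (Y2 i)"
    and z: "\<And>i v. z v $ i = X1 i v - X2 i v + c i"
    and w: "\<And>i v. w v $ i = Y1 i v - Y2 i v + d i"
    and pos: "\<And>i. var P (\<lambda>v. X1 i v - X2 i v) > 0" "\<And>i. var P (\<lambda>v. Y1 i v - Y2 i v) > 0"
    and close1: "\<And>i. sqrt (var P (\<lambda>v. X1 i v / sqrt (var P (\<lambda>v. X1 i v - X2 i v))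
                                     - Y1 i v / sqrt (var P (\<lambda>v. Y1 i v - Y2 i v)))) \<le> \<epsilon>"
    and close2: "\<And>i. sqrt (var P (\<lambda>v. X2 i v / sqrt (var P (\<lambda>v. X1 i v - X2 i v))
                                     - Y2 i v / sqrt (var P (\<lambda>v. Y1 i v - Y2 i v)))) \<le> \<epsilon>"
  shows "d_SVD P z w \<le> 2 * \<epsilon>"
proof -
  have eps: "\<epsilon> \<ge> 0" using close1 real_sqrt_ge_zero[OF var_nonneg] order_trans by blast
  have z_eq: "(\<lambda>v. z v $ i) = (\<lambda>v. (X1 i v - X2 i v) + c i)"
    and w_eq: "(\<lambda>v. w v $ i) = (\<lambda>v. (Y1 i v - Y2 i v) + d i)" for i
    by (simp_all add: fun_eq_iff z w)
  have sq_diff: "square_integrable P (\<lambda>v. X1 i v - X2 i v)" "square_integrable P (\<lambda>v. Y1 i v - Y2 i v)" for i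
    using sq by (simp_all add: square_integrable_diff)
  have z_sq: "square_integrable P (\<lambda>v. z v $ i)" and w_sq: "square_integrable P (\<lambda>v. w v $ i)" for i
    unfolding z_eq w_eq using prob_space.square_integrable_affine[OF P sq_diff(1), of 1]
      prob_space.square_integrable_affine[OF P sq_diff(2), of 1] by simp_all
  have "cov P (zscore P (\<lambda>v. z v $ i)) (zscore P (\<lambda>v. w v $ i)) \<ge> 1 - 2 * \<epsilon>\<^sup>2" for i
  proof -
    have "cov P (zscore P (\<lambda>v. z v $ i)) (zscore P (\<lambda>v. w v $ i)) =
        cov P (zscore P (\<lambda>v. X1 i v - X2 i v)) (zscore P (\<lambda>v. Y1 i v - Y2 i v))"
      unfolding z_eq w_eq using sq_diff
      by (simp add: prob_space.zscore_add_const[OF P] prob_space.square_integrable_imp_integrable[OF P])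
    moreover have "var P (\<lambda>v. X1 i v / sqrt (var P (\<lambda>v. X1 i v - X2 i v))
        - Y1 i v / sqrt (var P (\<lambda>v. Y1 i v - Y2 i v))) \<le> \<epsilon>\<^sup>2"
      using close1[of i] by (rule sqrt_le_D)
    moreover have "var P (\<lambda>v. X2 i v / sqrt (var P (\<lambda>v. X1 i v - X2 i v))
        - Y2 i v / sqrt (var P (\<lambda>v. Y1 i v - Y2 i v))) \<le> \<epsilon>\<^sup>2"
      using close2[of i] by (rule sqrt_le_D)
    ultimately show ?thesis
      using prob_space.cov_zscore_diff_ge[OF P sq(1-4)[of i] pos[of i]] by linarith
  qed
  then have "d_SVD P z w \<le> 2 * \<epsilon>\<^sup>2"
    by (rule d_SVD_le_of_coordinate_cov[OF P z_sq w_sq])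
  moreover have "d_SVD P z w \<le> 1"
    using m_SVD_nonneg[OF P z_sq w_sq] unfolding d_SVD_def by simp
  moreover have "\<epsilon> * \<epsilon> \<le> \<epsilon> * 1" if "\<epsilon> \<le> 1"
    using that eps by (rule mult_left_mono)
  ultimately show ?thesis by (cases "\<epsilon> \<le> 1") (auto simp: power2_eq_square)
qed

section \<open>Softmax models and the LLV distance\<close>

lemma prob_space_unif: "prob_space (unif :: 'y::finite measure)"
  unfolding unif_def by (rule prob_space_measure_pmf)

lemma square_integrable_unif: "square_integrable (unif :: 'y::finite measure) X"
  unfolding square_integrable_def unif_def by (auto intro: integrable_measure_pmf_finite)

lemma var_unif_pos:
  assumes "\<not> (\<exists>c. \<forall>y. X y = c)"
  shows "var (unif :: 'y::finite measure) X > 0"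
proof -
  define m where "m = expect unif X"
  have "var unif X = (\<Sum>y\<in>UNIV. (X y - m)\<^sup>2) / real CARD('y)"
    unfolding var_def m_def[symmetric] unfolding unif_def expect_def
    by (rule integral_pmf_of_set) auto
  moreover have "(\<Sum>y\<in>UNIV. (X y - m)\<^sup>2) > 0"
  proof (rule ccontr)
    assume "\<not> (\<Sum>y\<in>UNIV. (X y - m)\<^sup>2) > 0"
    then have "(\<Sum>y\<in>UNIV. (X y - m)\<^sup>2) = 0"
      using sum_nonneg[of UNIV "\<lambda>y. (X y - m)\<^sup>2"] by simp
    then have "\<forall>y. X y = m" by (simp add: sum_nonneg_eq_0_iff)
    with assms show False by blast
  qed
  ultimately show ?thesis by (simp add: finite_UNIV_card_ge_0)
qed

lemma d_LLV_le_imp_label_terms: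
  assumes "d_LLV D x0 y0 XL YL lam p p' \<le> \<epsilon>" and "y \<in> YL - {y0}"
  shows "sqrt (var D (\<lambda>x. ln (p x y) / psi_x D y0 p y - ln (p' x y) / psi_x D y0 p' y)) \<le> \<epsilon>"
    and "sqrt (var D (\<lambda>x. ln (p x y0) / psi_x D y0 p y - ln (p' x y0) / psi_x D y0 p' y)) \<le> \<epsilon>"
proof -
  let ?t = "\<lambda>y. max (sqrt (var D (\<lambda>x. ln (p x y) / psi_x D y0 p y - ln (p' x y) / psi_x D y0 p' y)))
    (sqrt (var D (\<lambda>x. ln (p x y0) / psi_x D y0 p y - ln (p' x y0) / psi_x D y0 p' y)))"
  have "?t y \<le> Max (?t ` (YL - {y0}))"
    using assms(2) by (intro Max_ge) auto
  also have "\<dots> \<le> \<epsilon>"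
    using assms(1) unfolding d_LLV_def Let_def by (rule order_trans[rotated]) simp
  finally show "sqrt (var D (\<lambda>x. ln (p x y) / psi_x D y0 p y - ln (p' x y) / psi_x D y0 p' y)) \<le> \<epsilon>"
    and "sqrt (var D (\<lambda>x. ln (p x y0) / psi_x D y0 p y - ln (p' x y0) / psi_x D y0 p' y)) \<le> \<epsilon>"
    by simp_all
qed

lemma d_LLV_le_imp_input_terms:
  assumes "d_LLV D x0 y0 XL YL lam p p' \<le> \<epsilon>" and "finite XL" and "x \<in> XL - {x0}"
  shows "sqrt (var unif (\<lambda>y. ln (p x y) / psi_y x0 p x - ln (p' x y) / psi_y x0 p' x)) \<le> \<epsilon>"
    and "sqrt (var unif (\<lambda>y. ln (p x0 y) / psi_y x0 p x - ln (p' x0 y) / psi_y x0 p' x)) \<le> \<epsilon>"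
proof -
  let ?t = "\<lambda>x. max (sqrt (var unif (\<lambda>y. ln (p x y) / psi_y x0 p x - ln (p' x y) / psi_y x0 p' x)))
    (sqrt (var unif (\<lambda>y. ln (p x0 y) / psi_y x0 p x - ln (p' x0 y) / psi_y x0 p' x)))"
  have "?t x \<le> Max (?t ` (XL - {x0}))"
    using assms(2,3) by (intro Max_ge) auto
  also have "\<dots> \<le> \<epsilon>"
    using assms(1) unfolding d_LLV_def Let_def by (rule order_trans[rotated]) simp
  finally show "sqrt (var unif (\<lambda>y. ln (p x y) / psi_y x0 p x - ln (p' x y) / psi_y x0 p' x)) \<le> \<epsilon>"
    and "sqrt (var unif (\<lambda>y. ln (p x0 y) / psi_y x0 p x - ln (p' x0 y) / psi_y x0 p' x)) \<le> \<epsilon>"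
    by simp_all
qed

definition log_partition :: "('x \<Rightarrow> real^'m) \<Rightarrow> ('y::finite \<Rightarrow> real^'m) \<Rightarrow> 'x \<Rightarrow> real" where
  "log_partition f g x = ln (\<Sum>y\<in>UNIV. exp (f x \<bullet> g y))"

lemma ln_model_p: "ln (model_p f g x y) = f x \<bullet> g y - log_partition f g x"
proof -
  have "(\<Sum>y'\<in>UNIV. exp (f x \<bullet> g y')) > 0" by (rule sum_pos) auto
  then show ?thesis unfolding model_p_def log_partition_def by (simp add: ln_div)
qed

(* The "+ 0" matches the shape of the coordinates in d_SVD_le_of_log_ratio_coordinates. *)
lemma embedding_log_ratio_nth:
  "(transpose (\<chi> a i. (g (ys i) - g y0) $ a) *v f x) $ i =
    ln (model_p f g x (ys i)) - ln (model_p f g x y0) + 0"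
  by (simp add: matrix_vector_mult_def transpose_def inner_vec_def ln_model_p
      inner_commute sum_subtractf algebra_simps)

lemma unembedding_log_ratio_nth:
  "(transpose (\<chi> a i. (f (xs i) - f x0) $ a) *v g y) $ i =
    ln (model_p f g (xs i) y) - ln (model_p f g x0 y)
    + (log_partition f g (xs i) - log_partition f g x0)"
  by (simp add: matrix_vector_mult_def transpose_def inner_vec_def ln_model_p sum_subtractf algebra_simps)

lemma admissible_square_integrable:
  assumes "admissible D x0 y0 XL YL p"
  shows "square_integrable D (\<lambda>x. ln (p x y))"
  using assms by (simp add: admissible_def square_integrable_def)

lemma admissible_var_label_pos:
  assumes "admissible D x0 y0 XL YL p" and "y \<in> YL - {y0}"
  shows "var D (\<lambda>x. ln (p x y) - ln (p x y0)) > 0"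
  using assms by (simp add: admissible_def)

lemma admissible_var_input_pos:
  assumes "admissible D x0 y0 XL YL p" and "x \<in> XL - {x0}"
  shows "var unif (\<lambda>y. ln (p x y) - ln (p x0 y)) > 0"
  by (rule var_unif_pos) (use assms in \<open>simp add: admissible_def\<close>)

lemma d_SVD_embeddings_le:
  fixes f f' :: "'x \<Rightarrow> real^'m::finite" and g g' :: "'y::finite \<Rightarrow> real^'m"
  assumes D: "prob_space D" and ys: "\<And>i. ys i \<in> YL - {y0}"
    and adm: "admissible D x0 y0 XL YL (model_p f g)"
    and adm': "admissible D x0 y0 XL YL (model_p f' g')"
    and dist: "d_LLV D x0 y0 XL YL lam (model_p f g) (model_p f' g') \<le> \<epsilon>"
  shows "d_SVD D (\<lambda>x. transpose (\<chi> a i. (g (ys i) - g y0) $ a) *v f x)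
                 (\<lambda>x. transpose (\<chi> a i. (g' (ys i) - g' y0) $ a) *v f' x) \<le> 2 * \<epsilon>"
proof -
  note sq = admissible_square_integrable[OF adm] admissible_square_integrable[OF adm']
  note pos = admissible_var_label_pos[OF adm ys] admissible_var_label_pos[OF adm' ys]
  note close = d_LLV_le_imp_label_terms[OF dist ys, unfolded psi_x_def]
  show ?thesis
    by (rule d_SVD_le_of_log_ratio_coordinates[
          where ?X1.0 = "\<lambda>i x. ln (model_p f g x (ys i))" and ?X2.0 = "\<lambda>i x. ln (model_p f g x y0)"
            and ?Y1.0 = "\<lambda>i x. ln (model_p f' g' x (ys i))" and ?Y2.0 = "\<lambda>i x. ln (model_p f' g' x y0)"
            and c = "\<lambda>_. 0" and d = "\<lambda>_. 0",
          OF D sq(1) sq(1) sq(2) sq(2) embedding_log_ratio_nth embedding_log_ratio_nth pos close])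
qed

lemma d_SVD_unembeddings_le:
  fixes f f' :: "'x \<Rightarrow> real^'m::finite" and g g' :: "'y::finite \<Rightarrow> real^'m"
  assumes XL: "finite XL" and xs: "\<And>i. xs i \<in> XL - {x0}"
    and adm: "admissible D x0 y0 XL YL (model_p f g)"
    and adm': "admissible D x0 y0 XL YL (model_p f' g')"
    and dist: "d_LLV D x0 y0 XL YL lam (model_p f g) (model_p f' g') \<le> \<epsilon>"
  shows "d_SVD unif (\<lambda>y. transpose (\<chi> a i. (f (xs i) - f x0) $ a) *v g y)
                    (\<lambda>y. transpose (\<chi> a i. (f' (xs i) - f' x0) $ a) *v g' y) \<le> 2 * \<epsilon>"
proof -
  note pos = admissible_var_input_pos[OF adm xs] admissible_var_input_pos[OF adm' xs]
  note close = d_LLV_le_imp_input_terms[OF dist XL xs, unfolded psi_y_def]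
  show ?thesis
    by (rule d_SVD_le_of_log_ratio_coordinates[
          where ?X1.0 = "\<lambda>i y. ln (model_p f g (xs i) y)" and ?X2.0 = "\<lambda>i y. ln (model_p f g x0 y)"
            and ?Y1.0 = "\<lambda>i y. ln (model_p f' g' (xs i) y)" and ?Y2.0 = "\<lambda>i y. ln (model_p f' g' x0 y)"
            and c = "\<lambda>i. log_partition f g (xs i) - log_partition f g x0"
            and d = "\<lambda>i. log_partition f' g' (xs i) - log_partition f' g' x0",
          OF prob_space_unif square_integrable_unif square_integrable_unif square_integrable_unif
            square_integrable_unif unembedding_log_ratio_nth unembedding_log_ratio_nth pos close])
qed

theorem mainTheorem10:
  fixes D :: "'x measure"
    and f f' :: "'x \<Rightarrow> real^'m"
    and g g' :: "'y::finite \<Rightarrow> real^'m"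
    and x0 :: 'x and y0 :: 'y
    and XL :: "'x set" and YL :: "'y set"
    and xs :: "'m \<Rightarrow> 'x" and ys :: "'m \<Rightarrow> 'y"
    and lam \<epsilon> :: real
  assumes D: "prob_space D" "space D = UNIV"
    and XL: "finite XL" "x0 \<in> XL"
    and YL: "y0 \<in> YL" "card (UNIV - YL) = 1"
    and ys: "inj ys" "\<forall>i. ys i \<in> YL - {y0}"
    and xs: "inj xs" "\<forall>i. xs i \<in> XL - {x0}"
    and invL: "invertible (\<chi> a i. (g (ys i) - g y0) $ a)"
    and invL': "invertible (\<chi> a i. (g' (ys i) - g' y0) $ a)"
    and invN: "invertible (\<chi> a i. (f (xs i) - f x0) $ a)"
    and invN': "invertible (\<chi> a i. (f' (xs i) - f' x0) $ a)"
    and adm: "admissible D x0 y0 XL YL (model_p f g)"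
    and adm': "admissible D x0 y0 XL YL (model_p f' g')"
    and nonsing:
      "let L = (\<chi> a i. (g (ys i) - g y0) $ a);
           L' = (\<chi> a i. (g' (ys i) - g' y0) $ a);
           N = (\<chi> a i. (f (xs i) - f x0) $ a);
           N' = (\<chi> a i. (f' (xs i) - f' x0) $ a);
           z1 = (\<lambda>x. transpose L *v f x); z2 = (\<lambda>x. transpose L' *v f' x);
           w1 = (\<lambda>y. transpose N *v g y); w2 = (\<lambda>y. transpose N' *v g' y)
       in invertible (cross_cov D (standardize D z1) (standardize D z1)) \<and>
          invertible (cross_cov unif (standardize unif w1) (standardize unif w1)) \<and>
          invertible (cross_cov D (standardize D z1) (standardize D z2)) \<and>
          invertible (cross_cov unif (standardize unif w1) (standardize unif w2))"
    and lam: "lam > 0" and eps: "\<epsilon> \<ge> 0"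
    and dist: "d_LLV D x0 y0 XL YL lam (model_p f g) (model_p f' g') \<le> \<epsilon>"
  shows "let L = (\<chi> a i. (g (ys i) - g y0) $ a);
             L' = (\<chi> a i. (g' (ys i) - g' y0) $ a);
             N = (\<chi> a i. (f (xs i) - f x0) $ a);
             N' = (\<chi> a i. (f' (xs i) - f' x0) $ a);
             z1 = (\<lambda>x. transpose L *v f x); z2 = (\<lambda>x. transpose L' *v f' x);
             w1 = (\<lambda>y. transpose N *v g y); w2 = (\<lambda>y. transpose N' *v g' y)
         in max (d_SVD D z1 z2) (d_SVD unif w1 w2) \<le> 2 * real CARD('m) * \<epsilon>"
proof -
  have "d_SVD D (\<lambda>x. transpose (\<chi> a i. (g (ys i) - g y0) $ a) *v f x)
                (\<lambda>x. transpose (\<chi> a i. (g' (ys i) - g' y0) $ a) *v f' x) \<le> 2 * \<epsilon>"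
    using ys(2) by (intro d_SVD_embeddings_le[OF D(1) _ adm adm' dist]) blast
  moreover have "d_SVD unif (\<lambda>y. transpose (\<chi> a i. (f (xs i) - f x0) $ a) *v g y)
                   (\<lambda>y. transpose (\<chi> a i. (f' (xs i) - f' x0) $ a) *v g' y) \<le> 2 * \<epsilon>"
    using xs(2) by (intro d_SVD_unembeddings_le[OF XL(1) _ adm adm' dist]) blast
  moreover have "1 \<le> real CARD('m)"
    by (simp add: Suc_le_eq)
  then have "2 * \<epsilon> \<le> 2 * real CARD('m) * \<epsilon>"
    using eps by (simp add: mult_right_mono)
  ultimately show ?thesis unfolding Let_def by linarith
qed

end
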